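(* For every graph $G$, every linear order $\prec$ on $V(G)$ and every $r\in\mathbb N$, \[\mathrm{wcol}_r(\mathrm{cp}(G),\mathrm{cp}(\prec))\le 2\cdot\mathrm{wcol}_r(G,\prec).\]
   Context: The copy product $\mathrm{cp}(G)$ is obtained by taking the disjoint union of $G$ with a copy $G'$ (the copy of $v$ denoted $\mathrm{cp}(v)$), making every $v$ adjacent to $\mathrm{cp}(v)$, and making $v$ and $\mathrm{cp}(v)$ true twins (same closed neighborhoods); equivalently the lexicographic product of $G$ with $K_2$. $\mathrm{cp}(\prec)$ is the order on $V(\mathrm{cp}(G))$ obtained from $\prec$ by inserting each $\mathrm{cp}(v)$ immediately before $v$. $\mathrm{wcol}_r(H,\prec)$ is the maximum over $v$ of the number of vertices $u$ such that some path of length at most $r$ from $v$ to $u$ has $u$ as its $\prec$-smallest vertex. *)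

theory Defs
  imports Main
begin

definition is_graph :: "'a set \<Rightarrow> ('a \<Rightarrow> 'a \<Rightarrow> bool) \<Rightarrow> bool" where
  "is_graph V E \<longleftrightarrow> finite V \<and> (\<forall>u w. E u w \<longrightarrow> u \<in> V \<and> w \<in> V)
     \<and> (\<forall>u w. E u w \<longrightarrow> E w u) \<and> (\<forall>u. \<not> E u u)"

definition linorder_on :: "'a set \<Rightarrow> ('a \<Rightarrow> 'a \<Rightarrow> bool) \<Rightarrow> bool" where
  "linorder_on V lt \<longleftrightarrow> (\<forall>x\<in>V. \<not> lt x x)
     \<and> (\<forall>x\<in>V. \<forall>y\<in>V. \<forall>z\<in>V. lt x y \<longrightarrow> lt y z \<longrightarrow> lt x z)
     \<and> (\<forall>x\<in>V. \<forall>y\<in>V. x \<noteq> y \<longrightarrow> lt x y \<or> lt y x)"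

text \<open>A path, given as the (nonempty, repetition-free) list of its vertices;
  its length is the number of edges, i.e. length ps - 1.\<close>
definition is_path :: "'a set \<Rightarrow> ('a \<Rightarrow> 'a \<Rightarrow> bool) \<Rightarrow> 'a list \<Rightarrow> bool" where
  "is_path V E ps \<longleftrightarrow> ps \<noteq> [] \<and> set ps \<subseteq> V \<and> distinct ps
     \<and> (\<forall>i. Suc i < length ps \<longrightarrow> E (ps ! i) (ps ! Suc i))"

definition wreach :: "'a set \<Rightarrow> ('a \<Rightarrow> 'a \<Rightarrow> bool) \<Rightarrow> ('a \<Rightarrow> 'a \<Rightarrow> bool) \<Rightarrow> nat \<Rightarrow> 'a \<Rightarrow> 'a set" where
  "wreach V E lt r v = {u. \<exists>ps. is_path V E ps \<and> hd ps = v \<and> last ps = u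
      \<and> length ps \<le> Suc r \<and> (\<forall>x\<in>set ps. x = u \<or> lt u x)}"

definition wcol :: "'a set \<Rightarrow> ('a \<Rightarrow> 'a \<Rightarrow> bool) \<Rightarrow> ('a \<Rightarrow> 'a \<Rightarrow> bool) \<Rightarrow> nat \<Rightarrow> nat" where
  "wcol V E lt r = Max (insert 0 ((\<lambda>v. card (wreach V E lt r v)) ` V))"

text \<open>Copy product: vertex (v, False) is v, (v, True) is cp(v).\<close>
definition cp_V :: "'a set \<Rightarrow> ('a \<times> bool) set" where
  "cp_V V = V \<times> UNIV"

definition cp_E :: "'a set \<Rightarrow> ('a \<Rightarrow> 'a \<Rightarrow> bool) \<Rightarrow> ('a \<times> bool) \<Rightarrow> ('a \<times> bool) \<Rightarrow> bool" where
  "cp_E V E x y \<longleftrightarrow> (fst x = fst y \<and> fst x \<in> V \<and> snd x \<noteq> snd y) \<or> E (fst x) (fst y)"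

text \<open>cp(lt): each copy cp(v) is inserted immediately before v.\<close>
definition cp_lt :: "('a \<Rightarrow> 'a \<Rightarrow> bool) \<Rightarrow> ('a \<times> bool) \<Rightarrow> ('a \<times> bool) \<Rightarrow> bool" where
  "cp_lt lt x y \<longleftrightarrow> lt (fst x) (fst y) \<or> (fst x = fst y \<and> snd x \<and> \<not> snd y)"

end

theory Submission
  imports Defs
begin

text \<open>Projecting a path of cp(G) to G yields a walk that may stand still (where the path
  steps between v and cp(v)). Shortcutting that walk gives a path of G between the
  projected end vertices which is no longer and uses only projected vertices. Since
  cp(\<prec>) compares first coordinates first, the projection of the \<prec>-smallest vertex of the
  original path is still the smallest vertex of the new one. So every vertex weakly
  r-reachable from (v, b) in cp(G) is one of the two copies of a vertex weakly
  r-reachable from v in G.\<close>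

definition lazy_walk :: "'a set \<Rightarrow> ('a \<Rightarrow> 'a \<Rightarrow> bool) \<Rightarrow> 'a list \<Rightarrow> bool" where
  "lazy_walk V E ws \<longleftrightarrow> ws \<noteq> [] \<and> set ws \<subseteq> V
     \<and> (\<forall>i. Suc i < length ws \<longrightarrow> ws ! i = ws ! Suc i \<or> E (ws ! i) (ws ! Suc i))"

lemma lazy_walk_Cons:
  "lazy_walk V E (x # ws) \<longleftrightarrow>
     x \<in> V \<and> (ws = [] \<or> lazy_walk V E ws \<and> (x = hd ws \<or> E x (hd ws)))"
proof (cases ws)
  case (Cons y ys)
  have steps: "(\<forall>i. Suc i < length (x # ws) \<longrightarrow> P ((x # ws) ! i) ((x # ws) ! Suc i))
        \<longleftrightarrow> P x y \<and> (\<forall>i. Suc i < length ws \<longrightarrow> P (ws ! i) (ws ! Suc i))" for P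
  proof
    assume step: "\<forall>i. Suc i < length (x # ws) \<longrightarrow> P ((x # ws) ! i) ((x # ws) ! Suc i)"
    show "P x y \<and> (\<forall>i. Suc i < length ws \<longrightarrow> P (ws ! i) (ws ! Suc i))"
      using step[rule_format, of 0] step[rule_format, of "Suc _"] Cons by auto
  next
    assume "P x y \<and> (\<forall>i. Suc i < length ws \<longrightarrow> P (ws ! i) (ws ! Suc i))"
    then show "\<forall>i. Suc i < length (x # ws) \<longrightarrow> P ((x # ws) ! i) ((x # ws) ! Suc i)"
      using Cons by (auto simp: nth_Cons split: nat.split)
  qed
  show ?thesis
    unfolding lazy_walk_def steps[of "\<lambda>a b. a = b \<or> E a b"] using Cons by auto
qed (simp add: lazy_walk_def)

lemma is_path_drop:
  assumes "is_path V E ps" "n < length ps"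
  shows "is_path V E (drop n ps)"
  using assms unfolding is_path_def
  by (auto simp: distinct_drop dest: in_set_dropD)

lemma is_path_Cons:
  assumes "is_path V E ps" "x \<in> V" "x \<notin> set ps" "E x (hd ps)"
  shows "is_path V E (x # ps)"
  using assms unfolding is_path_def
  by (auto simp: hd_conv_nth nth_Cons split: nat.split)

lemma lazy_walk_contains_path:
  assumes "lazy_walk V E ws"
  shows "\<exists>ps. is_path V E ps \<and> hd ps = hd ws \<and> last ps = last ws
           \<and> length ps \<le> length ws \<and> set ps \<subseteq> set ws"
  using assms
proof (induction ws)
  case Nil
  then show ?case by (simp add: lazy_walk_def)
next
  case (Cons x ws)
  show ?case
  proof (cases "ws = []")
    case True
    then show ?thesis
      using Cons.prems by (intro exI[of _ "[x]"]) (auto simp: is_path_def lazy_walk_def)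
  next
    case False
    with Cons.prems have x: "x \<in> V" "x = hd ws \<or> E x (hd ws)" and "lazy_walk V E ws"
      by (auto simp: lazy_walk_Cons)
    then obtain ps where ps: "is_path V E ps" "hd ps = hd ws" "last ps = last ws"
        "length ps \<le> length ws" "set ps \<subseteq> set ws"
      using Cons.IH by blast
    have "ps \<noteq> []" using ps(1) by (simp add: is_path_def)
    show ?thesis
    proof (cases "x \<in> set ps")
      case True
      \<comment> \<open>cut off the loop that returns to x\<close>
      then obtain n where n: "n < length ps" "ps ! n = x" by (auto simp: in_set_conv_nth)
      show ?thesis
        using is_path_drop[OF ps(1) n(1)] n ps False \<open>ps \<noteq> []\<close>
        by (intro exI[of _ "drop n ps"]) (auto simp: hd_drop_conv_nth dest: in_set_dropD)
    next
      case False
      with x \<open>ps \<noteq> []\<close> ps(2) have "E x (hd ps)" by (metis hd_in_set)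
      with is_path_Cons[OF ps(1) x(1) False] show ?thesis
        using ps \<open>ws \<noteq> []\<close> \<open>ps \<noteq> []\<close> by (intro exI[of _ "x # ps"]) auto
    qed
  qed
qed

lemma lazy_walk_map_fst_cp_path:
  assumes "is_path (cp_V V) (cp_E V E) ps"
  shows "lazy_walk V E (map fst ps)"
  using assms by (auto simp: is_path_def lazy_walk_def cp_V_def cp_E_def)

lemma wreach_cp_subset:
  "wreach (cp_V V) (cp_E V E) (cp_lt lt) r (v, b) \<subseteq> wreach V E lt r v \<times> UNIV"
proof
  fix y assume "y \<in> wreach (cp_V V) (cp_E V E) (cp_lt lt) r (v, b)"
  then obtain ps where ps: "is_path (cp_V V) (cp_E V E) ps" "hd ps = (v, b)" "last ps = y"
      "length ps \<le> Suc r" "\<forall>x\<in>set ps. x = y \<or> cp_lt lt y x"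
    unfolding wreach_def by blast
  have "ps \<noteq> []" using ps(1) by (simp add: is_path_def)
  obtain qs where qs: "is_path V E qs" "hd qs = hd (map fst ps)" "last qs = last (map fst ps)"
      "length qs \<le> length ps" "set qs \<subseteq> fst ` set ps"
    using lazy_walk_contains_path[OF lazy_walk_map_fst_cp_path[OF ps(1)]] by auto
  have "hd qs = v" "last qs = fst y"
    using qs(2,3) ps(2,3) \<open>ps \<noteq> []\<close> by (simp_all add: hd_map last_map)
  moreover have "\<forall>z\<in>set qs. z = fst y \<or> lt (fst y) z"
    using qs(5) ps(5) by (fastforce simp: cp_lt_def)
  ultimately have "fst y \<in> wreach V E lt r v"
    using qs(1,4) ps(4) unfolding wreach_def by fastforce
  then show "y \<in> wreach V E lt r v \<times> UNIV" by (cases y) auto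
qed

lemma finite_wreach:
  "finite V \<Longrightarrow> finite (wreach V E lt r v)"
  by (rule finite_subset[of _ V]) (auto simp: wreach_def is_path_def)

lemma card_wreach_cp_le:
  assumes "finite V"
  shows "card (wreach (cp_V V) (cp_E V E) (cp_lt lt) r (v, b)) \<le> 2 * card (wreach V E lt r v)"
proof -
  have "card (wreach (cp_V V) (cp_E V E) (cp_lt lt) r (v, b))
        \<le> card (wreach V E lt r v \<times> (UNIV :: bool set))"
    using assms by (intro card_mono wreach_cp_subset) (simp add: finite_wreach)
  also have "\<dots> = 2 * card (wreach V E lt r v)"
    by (simp add: card_cartesian_product)
  finally show ?thesis .
qed

lemma card_wreach_le_wcol:
  "finite V \<Longrightarrow> v \<in> V \<Longrightarrow> card (wreach V E lt r v) \<le> wcol V E lt r"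
  unfolding wcol_def by (intro Max_ge) auto

lemma wcol_leI:
  "finite V \<Longrightarrow> (\<And>v. v \<in> V \<Longrightarrow> card (wreach V E lt r v) \<le> k) \<Longrightarrow> wcol V E lt r \<le> k"
  unfolding wcol_def by (subst Max_le_iff) auto

theorem lemma7p20:
  fixes V :: "'a set" and E :: "'a \<Rightarrow> 'a \<Rightarrow> bool" and lt :: "'a \<Rightarrow> 'a \<Rightarrow> bool" and r :: nat
  assumes "is_graph V E" and "linorder_on V lt"
  shows "wcol (cp_V V) (cp_E V E) (cp_lt lt) r \<le> 2 * wcol V E lt r"
proof (rule wcol_leI)
  have "finite V" using assms(1) by (simp add: is_graph_def)
  then show "finite (cp_V V)" by (simp add: cp_V_def)
  fix x assume "x \<in> cp_V V"
  then obtain v b where "x = (v, b)" "v \<in> V" by (auto simp: cp_V_def)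
  then show "card (wreach (cp_V V) (cp_E V E) (cp_lt lt) r x) \<le> 2 * wcol V E lt r"
    using card_wreach_cp_le[OF \<open>finite V\<close>] card_wreach_le_wcol[OF \<open>finite V\<close>]
    by (metis le_trans mult_le_mono2)
qed

end
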